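(* Suppose $T\in\mathcal B(\mathcal H)$ is quasitriangular and $\{P_n\}$ is a filtration with $\|(I-P_n)TP_n\|\to0$. Let $T_n=P_nT|_{P_n\mathcal H}$, an operator on the finite-dimensional space $P_n\mathcal H$. Then $j_{T_n}(\lambda)\to j_T(\lambda)$ for every $\lambda\in\mathbb C$.
   Context: $\mathcal H$ is a complex separable Hilbert space. For an operator $A$ on a Hilbert space $\mathcal K$, $j_A(z)=\inf\{\|(A-z)h\|:h\in\mathcal K,\|h\|=1\}$. A filtration is a sequence $\{P_n\}$ of finite-rank orthogonal projections with $\operatorname{Ran}P_n\subseteq\operatorname{Ran}P_{n+1}$ and $\bigcup_n\operatorname{Ran}P_n$ dense in $\mathcal H$. $T$ is quasitriangular if there is a filtration $\{P_n\}$ with $\|(I-P_n)TP_n\|\to0$. *)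

theory Defs
  imports "HOL-Analysis.Analysis"
begin

text \<open>A complex Hilbert space is modelled as a real Hilbert space (type class
real_inner + complete_space) together with a complex structure J (multiplication
by the imaginary unit): a real-linear isometry with J (J x) = - x.
Complex scalar multiplication is c x = Re c x + Im c (J x); the complex inner
product has real part equal to the real inner product, so norms agree.\<close>

definition complex_structure :: "('a::real_inner \<Rightarrow> 'a) \<Rightarrow> bool" where
  "complex_structure J \<longleftrightarrow> linear J \<and> (\<forall>x. J (J x) = - x) \<and> (\<forall>x. norm (J x) = norm x)"

definition cscale :: "('a::real_vector \<Rightarrow> 'a) \<Rightarrow> complex \<Rightarrow> 'a \<Rightarrow> 'a" where
  "cscale J c x = Re c *\<^sub>R x + Im c *\<^sub>R J x"

definition bounded_clinear_op :: "('a::real_normed_vector \<Rightarrow> 'a) \<Rightarrow> ('a \<Rightarrow> 'a) \<Rightarrow> bool" where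
  "bounded_clinear_op J T \<longleftrightarrow> bounded_linear T \<and> (\<forall>x. T (J x) = J (T x))"

definition finite_rank_orth_proj :: "('a::real_inner \<Rightarrow> 'a) \<Rightarrow> ('a \<Rightarrow> 'a) \<Rightarrow> bool" where
  "finite_rank_orth_proj J P \<longleftrightarrow> bounded_clinear_op J P \<and> (\<forall>x. P (P x) = P x)
     \<and> (\<forall>x y. inner (P x) y = inner x (P y))
     \<and> (\<exists>B. finite B \<and> range P = span B)"

definition filtration :: "('a::real_inner \<Rightarrow> 'a) \<Rightarrow> (nat \<Rightarrow> 'a \<Rightarrow> 'a) \<Rightarrow> bool" where
  "filtration J P \<longleftrightarrow> (\<forall>n. finite_rank_orth_proj J (P n))
     \<and> (\<forall>n. range (P n) \<subseteq> range (P (Suc n)))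
     \<and> closure (\<Union>n. range (P n)) = UNIV"

definition quasitriangular :: "('a::real_inner \<Rightarrow> 'a) \<Rightarrow> ('a \<Rightarrow> 'a) \<Rightarrow> bool" where
  "quasitriangular J T \<longleftrightarrow> (\<exists>P. filtration J P \<and>
     ((\<lambda>n. onorm (\<lambda>x. T (P n x) - P n (T (P n x)))) \<longlonglongrightarrow> 0))"

definition jfun :: "('a::real_normed_vector \<Rightarrow> 'a) \<Rightarrow> 'a set \<Rightarrow> ('a \<Rightarrow> 'a) \<Rightarrow> complex \<Rightarrow> real" where
  "jfun J K A z = Inf {norm (A h - cscale J z h) | h. h \<in> K \<and> norm h = 1}"

end

theory Submission
  imports Defs
begin

text \<open>Write \<open>A = T - \<lambda>\<close>. For a unit vector \<open>h\<close> in \<open>Ran P\<^sub>n\<close> the vector \<open>(T\<^sub>n - \<lambda>) h\<close> is \<open>P\<^sub>n A h\<close>, and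
  \<open>A h - P\<^sub>n A h = (I - P\<^sub>n) T P\<^sub>n h\<close>; hence \<open>j\<^sub>T(\<lambda>) \<le> j\<^sub>T\<^sub>n(\<lambda>) + \<parallel>(I - P\<^sub>n) T P\<^sub>n\<parallel>\<close>.
  Conversely \<open>\<parallel>P\<^sub>n A g\<parallel> \<le> \<parallel>A g\<parallel>\<close>, and since the ranges increase to a dense subspace, every
  unit vector is eventually approximated by unit vectors of \<open>Ran P\<^sub>n\<close>, which bounds
  \<open>limsup j\<^sub>T\<^sub>n(\<lambda>)\<close> by \<open>j\<^sub>T(\<lambda>)\<close>.\<close>

definition orthogonal_projection :: "('a::real_inner \<Rightarrow> 'a) \<Rightarrow> bool" where
  "orthogonal_projection P \<longleftrightarrow>
     bounded_linear P \<and> (\<forall>x. P (P x) = P x) \<and> (\<forall>x y. inner (P x) y = inner x (P y))"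

lemma orthogonal_projection_norm_le:
  assumes "orthogonal_projection P"
  shows "norm (P x) \<le> norm x"
proof -
  have P: "bounded_linear P" "\<And>x. P (P x) = P x" "\<And>x y. inner (P x) y = inner x (P y)"
    using assms unfolding orthogonal_projection_def by auto
  interpret bounded_linear P by fact
  have "inner (P x) (x - P x) = 0"
    using P(2,3)[of x] by (simp add: inner_diff_right)
  then have "(norm x)\<^sup>2 = (norm (P x))\<^sup>2 + (norm (x - P x))\<^sup>2"
    using norm_add_Pythagorean[of "P x" "x - P x"] by (simp add: orthogonal_def)
  then have "(norm (P x))\<^sup>2 \<le> (norm x)\<^sup>2" by simp
  then show ?thesis by (rule power2_le_imp_le) simp
qed

lemma orthogonal_projection_fixes_range:
  "orthogonal_projection P \<Longrightarrow> h \<in> range P \<Longrightarrow> P h = h"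
  unfolding orthogonal_projection_def by auto

lemma norm_sgn_diff_le:
  fixes h y :: "'a::real_normed_vector"
  assumes "norm h = 1"
  shows "norm (sgn y - h) \<le> 2 * norm (y - h)"
proof (cases "y = 0")
  case True
  then show ?thesis using assms by simp
next
  case False
  have "norm (sgn y - y) = \<bar>1 - norm y\<bar>"
  proof -
    have "sgn y - y = (1 - norm y) *\<^sub>R sgn y"
      using False by (simp add: sgn_div_norm algebra_simps)
    then show ?thesis using False by (simp add: norm_sgn)
  qed
  also have "\<dots> \<le> norm (y - h)"
    using assms norm_triangle_ineq3[of y h] by (simp add: abs_minus_commute)
  finally show ?thesis
    using norm_triangle_ineq[of "sgn y - y" "y - h"] by simp
qed

lemma eventually_unit_vector_near:
  fixes V :: "nat \<Rightarrow> 'a::real_normed_vector set"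
  assumes "\<And>n. subspace (V n)" "incseq V" "closure (\<Union>n. V n) = UNIV"
    and "norm h = 1" "d > 0"
  shows "eventually (\<lambda>n. \<exists>g\<in>V n. norm g = 1 \<and> norm (g - h) < d) sequentially"
proof -
  have "min d 1 / 2 > 0" using \<open>d > 0\<close> by simp
  then obtain y m where "y \<in> V m" and y: "norm (y - h) < min d 1 / 2"
  proof -
    have "h \<in> closure (\<Union>n. V n)" using assms(3) by simp
    then show ?thesis
      using that \<open>min d 1 / 2 > 0\<close> unfolding closure_approachable dist_norm by blast
  qed
  have "y \<noteq> 0" using y \<open>norm h = 1\<close> by auto
  then have "norm (sgn y) = 1" by (simp add: norm_sgn)
  moreover have "norm (sgn y - h) < d"
    using norm_sgn_diff_le[OF \<open>norm h = 1\<close>, of y] y by linarith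
  moreover have "sgn y \<in> V n" if "m \<le> n" for n
    using \<open>y \<in> V m\<close> monoD[OF \<open>incseq V\<close> that] subspace_scale[OF assms(1)]
    by (auto simp: sgn_div_norm)
  ultimately show ?thesis
    unfolding eventually_sequentially by blast
qed

lemma Inf_tendsto_approximating_sets:
  fixes S :: "real set" and Sn :: "nat \<Rightarrow> real set"
  assumes "S \<noteq> {}" "bdd_below S" "\<And>n. bdd_below (Sn n)"
    and "e \<longlonglongrightarrow> 0"
    and lower: "\<And>n t. t \<in> Sn n \<Longrightarrow> Inf S - e n \<le> t"
    and upper: "\<And>s d. s \<in> S \<Longrightarrow> d > 0 \<Longrightarrow> eventually (\<lambda>n. \<exists>t\<in>Sn n. t < s + d) sequentially"
  shows "(\<lambda>n. Inf (Sn n)) \<longlonglongrightarrow> Inf S"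
proof (rule order_tendstoI)
  fix a assume "a > Inf S"
  then obtain s where "s \<in> S" "s < a" using cInf_lessD[OF \<open>S \<noteq> {}\<close>] by blast
  have "a - s > 0" using \<open>s < a\<close> by simp
  from upper[OF \<open>s \<in> S\<close> this] show "eventually (\<lambda>n. Inf (Sn n) < a) sequentially"
  proof (elim eventually_mono bexE)
    fix n t assume "t \<in> Sn n" "t < s + (a - s)"
    with cInf_lower[OF this(1) assms(3)] \<open>s < a\<close> show "Inf (Sn n) < a" by linarith
  qed
next
  fix a assume "a < Inf S"
  obtain s where "s \<in> S" using \<open>S \<noteq> {}\<close> by blast
  have "eventually (\<lambda>n. e n < Inf S - a) sequentially"
    using order_tendstoD(2)[OF \<open>e \<longlonglongrightarrow> 0\<close>] \<open>a < Inf S\<close> by simp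
  moreover have "eventually (\<lambda>n. Sn n \<noteq> {}) sequentially"
    using upper[OF \<open>s \<in> S\<close>, of 1] by (auto elim: eventually_mono)
  ultimately show "eventually (\<lambda>n. a < Inf (Sn n)) sequentially"
  proof eventually_elim
    case (elim n)
    then have "Inf S - e n \<le> Inf (Sn n)" by (intro cInf_greatest lower)
    with elim show ?case by linarith
  qed
qed

lemma norm_le_compression_plus_off_diagonal:
  assumes "bounded_linear A" "orthogonal_projection P" "h \<in> range P"
  shows "norm (A h) \<le> norm (P (A h)) + onorm (\<lambda>x. A (P x) - P (A (P x))) * norm h"
proof -
  have "bounded_linear P" using assms(2) unfolding orthogonal_projection_def by simp
  then have "bounded_linear (\<lambda>x. A (P x) - P (A (P x)))"
    using assms(1) by (intro bounded_linear_sub bounded_linear_compose[OF assms(1)]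
        bounded_linear_compose[OF \<open>bounded_linear P\<close>] bounded_linear_ident)
  from onorm[OF this, of h]
  have "norm (A h - P (A h)) \<le> onorm (\<lambda>x. A (P x) - P (A (P x))) * norm h"
    using orthogonal_projection_fixes_range[OF assms(2,3)] by simp
  then show ?thesis
    using norm_triangle_ineq[of "P (A h)" "A h - P (A h)"] by simp
qed

lemma compression_Inf_tendsto:
  fixes A :: "'a::real_inner \<Rightarrow> 'a" and P :: "nat \<Rightarrow> 'a \<Rightarrow> 'a"
  assumes A: "bounded_linear A"
    and P: "\<And>n. orthogonal_projection (P n)"
    and incseq: "incseq (\<lambda>n. range (P n))" and dense: "closure (\<Union>n. range (P n)) = UNIV"
    and off_diagonal: "(\<lambda>n. onorm (\<lambda>x. A (P n x) - P n (A (P n x)))) \<longlonglongrightarrow> 0"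
  shows "(\<lambda>n. Inf {norm (P n (A h)) | h. h \<in> range (P n) \<and> norm h = 1})
           \<longlonglongrightarrow> Inf {norm (A h) | h. norm h = 1}"
proof (cases "\<exists>u::'a. norm u = 1")
  case False
  then show ?thesis by simp
next
  case True
  define S where "S = {norm (A h) | h. norm h = 1}"
  have "bdd_below S" unfolding S_def by (rule bdd_belowI[of _ 0]) auto
  show ?thesis
    unfolding S_def[symmetric]
  proof (rule Inf_tendsto_approximating_sets[OF _ \<open>bdd_below S\<close> _ off_diagonal])
    show "S \<noteq> {}" using True unfolding S_def by auto
    show "bdd_below {norm (P n (A h)) | h. h \<in> range (P n) \<and> norm h = 1}" for n
      by (rule bdd_belowI[of _ 0]) auto
  next
    fix n t assume "t \<in> {norm (P n (A h)) | h. h \<in> range (P n) \<and> norm h = 1}"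
    then obtain h where h: "h \<in> range (P n)" "norm h = 1" "t = norm (P n (A h))" by blast
    have "Inf S \<le> norm (A h)"
      using h(2) \<open>bdd_below S\<close> unfolding S_def by (auto intro: cInf_lower)
    with norm_le_compression_plus_off_diagonal[OF A P h(1)] h(2,3)
    show "Inf S - onorm (\<lambda>x. A (P n x) - P n (A (P n x))) \<le> t" by simp
  next
    fix s d :: real assume "s \<in> S" "d > 0"
    then obtain h where h: "norm h = 1" "s = norm (A h)" unfolding S_def by blast
    obtain C where C: "C > 0" "\<And>x. norm (A x) \<le> norm x * C"
      using bounded_linear.pos_bounded[OF A] by blast
    have "subspace (range (P n))" for n
      using P[of n] by (intro real_vector.linear_subspace_image subspace_UNIV)
        (simp add: orthogonal_projection_def bounded_linear.linear)
    moreover have "d / C > 0" using \<open>d > 0\<close> C(1) by simp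
    ultimately have
      "eventually (\<lambda>n. \<exists>g\<in>range (P n). norm g = 1 \<and> norm (g - h) < d / C) sequentially"
      by (rule eventually_unit_vector_near[OF _ incseq dense h(1)])
    then show "eventually (\<lambda>n. \<exists>t\<in>{norm (P n (A h)) | h. h \<in> range (P n) \<and> norm h = 1}.
            t < s + d) sequentially"
    proof (elim eventually_mono bexE conjE)
      fix n g assume g: "g \<in> range (P n)" "norm g = 1" "norm (g - h) < d / C"
      have "norm (P n (A g)) \<le> norm (A g)" by (rule orthogonal_projection_norm_le[OF P])
      also have "\<dots> \<le> norm (A h) + norm (A (g - h))"
        using norm_triangle_ineq[of "A h" "A (g - h)"]
        by (simp add: linear_diff[OF bounded_linear.linear[OF A]])
      also have "\<dots> < s + d"
        using C(2)[of "g - h"] g(3) C(1) h(2) by (simp add: field_simps)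
      finally show "\<exists>t\<in>{norm (P n (A h)) | h. h \<in> range (P n) \<and> norm h = 1}. t < s + d"
        using g(1,2) by blast
    qed
  qed
qed

lemma complex_structure_bounded_linear:
  assumes "complex_structure J"
  shows "bounded_linear J"
proof -
  have "linear J" "\<And>x. norm (J x) = norm x"
    using assms unfolding complex_structure_def by auto
  then show ?thesis
    by (intro bounded_linear_intro[where K=1]) (auto simp: linear_add linear_scale)
qed

lemma bounded_linear_cscale: "bounded_linear J \<Longrightarrow> bounded_linear (cscale J z)"
  unfolding cscale_def
  by (intro bounded_linear_add bounded_linear_scaleR_right bounded_linear_ident
      bounded_linear_compose[of "scaleR (Im z)" J])

lemma bounded_clinear_op_cscale:
  assumes "bounded_clinear_op J P"
  shows "P (cscale J z x) = cscale J z (P x)"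
proof -
  interpret bounded_linear P using assms unfolding bounded_clinear_op_def by simp
  show ?thesis using assms by (simp add: bounded_clinear_op_def cscale_def add scaleR)
qed

lemma filtration_orthogonal_projection:
  "filtration J P \<Longrightarrow> orthogonal_projection (P n)"
  unfolding filtration_def finite_rank_orth_proj_def orthogonal_projection_def
    bounded_clinear_op_def by auto

lemma filtration_incseq: "filtration J P \<Longrightarrow> incseq (\<lambda>n. range (P n))"
  unfolding filtration_def by (simp add: incseq_SucI)

lemma compression_shift:
  assumes "bounded_clinear_op J P" "orthogonal_projection P" "h \<in> range P"
  shows "P (T h) - cscale J z h = P (T h - cscale J z h)"
  using assms orthogonal_projection_fixes_range[OF assms(2,3)]
  by (simp add: bounded_clinear_op_cscale linear_diff bounded_clinear_op_def bounded_linear.linear)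

lemma jfun_compression:
  assumes "bounded_clinear_op J P" "orthogonal_projection P"
  shows "jfun J (range P) (\<lambda>h. P (T h)) z
           = Inf {norm (P (T h - cscale J z h)) | h. h \<in> range P \<and> norm h = 1}"
  unfolding jfun_def
proof (intro arg_cong[where f = Inf] Collect_cong ex_cong1)
  fix t h
  show "(t = norm (P (T h) - cscale J z h) \<and> h \<in> range P \<and> norm h = 1)
      \<longleftrightarrow> (t = norm (P (T h - cscale J z h)) \<and> h \<in> range P \<and> norm h = 1)"
    using compression_shift[OF assms, of h T z] by auto
qed

lemma off_diagonal_shift:
  assumes "bounded_clinear_op J P" "orthogonal_projection P"
  shows "(\<lambda>x. (T (P x) - cscale J z (P x)) - P (T (P x) - cscale J z (P x)))
           = (\<lambda>x. T (P x) - P (T (P x)))"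
proof
  fix x
  have "P (T (P x) - cscale J z (P x)) = P (T (P x)) - cscale J z (P x)"
    using compression_shift[OF assms, of "P x"] by simp
  then show "(T (P x) - cscale J z (P x)) - P (T (P x) - cscale J z (P x))
      = T (P x) - P (T (P x))" by simp
qed

theorem lemma3p2:
  fixes J :: "'a::{real_inner, complete_space} \<Rightarrow> 'a"
    and T :: "'a \<Rightarrow> 'a" and P :: "nat \<Rightarrow> 'a \<Rightarrow> 'a"
  assumes "complex_structure J"
    and "\<exists>D::'a set. countable D \<and> closure D = UNIV"
    and "bounded_clinear_op J T"
    and "quasitriangular J T"
    and "filtration J P"
    and "(\<lambda>n. onorm (\<lambda>x. T (P n x) - P n (T (P n x)))) \<longlonglongrightarrow> 0"
  shows "\<forall>z::complex. (\<lambda>n. jfun J (range (P n)) (\<lambda>h. P n (T h)) z) \<longlonglongrightarrow> jfun J UNIV T z"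
proof
  fix z :: complex
  have J: "bounded_linear J" using assms(1) by (rule complex_structure_bounded_linear)
  have T: "bounded_linear T" using assms(3) unfolding bounded_clinear_op_def by simp
  have P: "\<And>n. bounded_clinear_op J (P n)" "\<And>n. orthogonal_projection (P n)"
    using assms(5) filtration_orthogonal_projection
    unfolding filtration_def finite_rank_orth_proj_def by simp_all
  have dense: "closure (\<Union>n. range (P n)) = UNIV"
    using assms(5) unfolding filtration_def by simp
  have "bounded_linear (\<lambda>h. T h - cscale J z h)"
    by (intro bounded_linear_sub T bounded_linear_cscale J)
  from compression_Inf_tendsto[OF this P(2) filtration_incseq[OF assms(5)] dense] assms(6)
  have "(\<lambda>n. Inf {norm (P n (T h - cscale J z h)) | h. h \<in> range (P n) \<and> norm h = 1})
          \<longlonglongrightarrow> Inf {norm (T h - cscale J z h) | h. norm h = 1}"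
    unfolding off_diagonal_shift[OF P] by blast
  then show "(\<lambda>n. jfun J (range (P n)) (\<lambda>h. P n (T h)) z) \<longlonglongrightarrow> jfun J UNIV T z"
    unfolding jfun_compression[OF P] jfun_def[of J UNIV] by simp
qed

end
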